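(* Let $A$ be a finite set of alternatives with $|A|\ge 3$ and let $\mathbb{D}$ be a minimally rich domain of linear orders over $A$ that is connected with two distinct neighbours. If $f:\mathbb{D}^2\to A$ (two voters) is unanimous and strategy-proof, then $f$ satisfies dictatorship.
   Context: A domain is a set $\mathbb{D}$ of linear orders (strict preferences) over $A$; a profile for voters $\{1,2\}$ is $(P_1,P_2)\in\mathbb{D}^2$. For a linear order $P_i$, $r_k(P_i)$ is its $k$-th ranked alternative. $\mathbb{D}$ is minimally rich if every $a\in A$ is ranked first in some $P_i\in\mathbb{D}$. Two linear orders $P_i,P_i'$ are adjacent if $P_i'$ is obtained from $P_i$ by swapping two consecutively ranked alternatives and leaving all other ranks unchanged. A social choice function $f:\mathbb{D}^2\to A$ is unanimous if $f(P)=a$ whenever both voters rank $a$ first; strategy-proof if there is no voter $i$, profile $P$ and $P_i'\in\mathbb{D}$ with $f(P_i',P_{-i})\,P_i\,f(P_i,P_{-i})$; and satisfies dictatorship if there is a voter $i$ with $f(P)=r_1(P_i)$ for all $P\in\mathbb{D}^2$. A path in $\mathbb{D}$ is a sequence of distinct preferences in $\mathbb{D}$ in which consecutive ones are adjacent; $\mathbb{D}$ is connected if any two of its preferences are joined by a path in $\mathbb{D}$. For $\bar{\mathbb{D}}\subseteq\mathbb{D}$, a neighbour of $\bar{\mathbb{D}}$ in $\mathbb{D}$ is a $P_i\in\mathbb{D}\setminus\bar{\mathbb{D}}$ adjacent to some element of $\bar{\mathbb{D}}$. Two preferences $P_i,P_i'\in\mathbb{D}$ are top-connected in $\mathbb{D}$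 if there is a path from $P_i$ to $P_i'$ in $\mathbb{D}$ all of whose members have the same top-ranked alternative. The top-connected closure $\mathbb{D}^{TCC}(P_i)$ is the set of preferences in $\mathbb{D}$ top-connected to $P_i$, together with $P_i$. $\mathbb{D}$ is connected with two distinct neighbours if (1) $\mathbb{D}$ is connected, and (2) for every $P_i\in\mathbb{D}$ there exist two neighbours $P_i',P_i''$ of $\mathbb{D}^{TCC}(P_i)$ in $\mathbb{D}$ with $r_1(P_i')\ne r_1(P_i'')$. *)

theory Defs
  imports Main
begin

text \<open>A linear order (strict preference) over A is represented as a list enumerating
  A without repetition, from best to worst: the k-th ranked alternative r_k(P) is P ! (k-1).\<close>

definition linorder_on :: "'a set \<Rightarrow> 'a list \<Rightarrow> bool" where
  "linorder_on A P \<longleftrightarrow> distinct P \<and> set P = A"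

definition rtop :: "'a list \<Rightarrow> 'a" where
  "rtop P = hd P"

definition prefers :: "'a list \<Rightarrow> 'a \<Rightarrow> 'a \<Rightarrow> bool" where
  "prefers P a b \<longleftrightarrow> (\<exists>i j. i < j \<and> j < length P \<and> P ! i = a \<and> P ! j = b)"

definition domain :: "'a set \<Rightarrow> 'a list set \<Rightarrow> bool" where
  "domain A D \<longleftrightarrow> D \<noteq> {} \<and> (\<forall>P\<in>D. linorder_on A P)"

definition minimally_rich :: "'a set \<Rightarrow> 'a list set \<Rightarrow> bool" where
  "minimally_rich A D \<longleftrightarrow> (\<forall>a\<in>A. \<exists>P\<in>D. rtop P = a)"

definition adjacent :: "'a list \<Rightarrow> 'a list \<Rightarrow> bool" where
  "adjacent P P' \<longleftrightarrow> (\<exists>k. Suc k < length P \<and> P' = P[k := P ! Suc k, Suc k := P ! k])"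

definition is_path :: "'a list set \<Rightarrow> 'a list list \<Rightarrow> bool" where
  "is_path D ps \<longleftrightarrow> ps \<noteq> [] \<and> distinct ps \<and> set ps \<subseteq> D \<and>
     (\<forall>i. Suc i < length ps \<longrightarrow> adjacent (ps ! i) (ps ! Suc i))"

definition connected_dom :: "'a list set \<Rightarrow> bool" where
  "connected_dom D \<longleftrightarrow> (\<forall>P\<in>D. \<forall>P'\<in>D. \<exists>ps. is_path D ps \<and> hd ps = P \<and> last ps = P')"

definition top_connected :: "'a list set \<Rightarrow> 'a list \<Rightarrow> 'a list \<Rightarrow> bool" where
  "top_connected D P P' \<longleftrightarrow> (\<exists>ps. is_path D ps \<and> hd ps = P \<and> last ps = P' \<and>
     (\<forall>Q\<in>set ps. rtop Q = rtop P))"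

definition TCC :: "'a list set \<Rightarrow> 'a list \<Rightarrow> 'a list set" where
  "TCC D P = {P' \<in> D. top_connected D P P'} \<union> {P}"

definition neighbour :: "'a list set \<Rightarrow> 'a list set \<Rightarrow> 'a list \<Rightarrow> bool" where
  "neighbour D S P' \<longleftrightarrow> P' \<in> D - S \<and> (\<exists>Q\<in>S. adjacent Q P')"

definition connected_two_neighbours :: "'a list set \<Rightarrow> bool" where
  "connected_two_neighbours D \<longleftrightarrow> connected_dom D \<and>
     (\<forall>P\<in>D. \<exists>P' P''. neighbour D (TCC D P) P' \<and> neighbour D (TCC D P) P'' \<and> rtop P' \<noteq> rtop P'')"

definition unanimous :: "'a list set \<Rightarrow> ('a list \<Rightarrow> 'a list \<Rightarrow> 'a) \<Rightarrow> bool" where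
  "unanimous D f \<longleftrightarrow> (\<forall>P1\<in>D. \<forall>P2\<in>D. \<forall>a. rtop P1 = a \<and> rtop P2 = a \<longrightarrow> f P1 P2 = a)"

definition strategy_proof :: "'a list set \<Rightarrow> ('a list \<Rightarrow> 'a list \<Rightarrow> 'a) \<Rightarrow> bool" where
  "strategy_proof D f \<longleftrightarrow>
     (\<forall>P1\<in>D. \<forall>P2\<in>D. \<forall>Q\<in>D.
        \<not> prefers P1 (f Q P2) (f P1 P2) \<and> \<not> prefers P2 (f P1 Q) (f P1 P2))"

definition dictatorship :: "'a list set \<Rightarrow> ('a list \<Rightarrow> 'a list \<Rightarrow> 'a) \<Rightarrow> bool" where
  "dictatorship D f \<longleftrightarrow> (\<forall>P1\<in>D. \<forall>P2\<in>D. f P1 P2 = rtop P1) \<or> (\<forall>P1\<in>D. \<forall>P2\<in>D. f P1 P2 = rtop P2)"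

end

theory Submission
  imports Defs
begin

text \<open>Call alternatives a and b top-swappable when D contains preferences a b r and b a r.
  Every neighbour of a top-connected closure arises from such a swap, so the domain conditions
  make this graph on the top-ranked alternatives connected, with every vertex of degree at
  least two. At profiles whose tops form a swappable pair (a, b) strategy-proofness confines
  the outcome to {a, b}, and one voter wins at all of them. If voter 1 wins at (x, y), he also
  wins at (y, z) for every swappable z \<noteq> x, and x is available to him whenever y is. Were the
  voters to split a pair, walking without backtracking would propagate the split until a
  vertex repeats (A is finite), and then voter 1 could both obtain and not obtain the same
  alternative against the same report. So whoever wins at one pair wins at every pair, every
  alternative is available to him against any report, and he is a dictator.\<close>

lemma rtop_Cons [simp]: "rtop (a # P) = a"
  by (simp add: rtop_def)

lemma prefers_Cons: "prefers (a # P) x y \<longleftrightarrow> (x = a \<and> y \<in> set P) \<or> prefers P x y"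
proof
  assume "prefers (a # P) x y"
  then obtain i j where ij: "i < j" "j < Suc (length P)" "(a # P) ! i = x" "(a # P) ! j = y"
    by (auto simp: prefers_def)
  then obtain j' where j: "j = Suc j'"
    using not0_implies_Suc by fastforce
  show "(x = a \<and> y \<in> set P) \<or> prefers P x y"
  proof (cases i)
    case 0
    then show ?thesis using ij j by auto
  next
    case (Suc i')
    then have "prefers P x y"
      using ij j unfolding prefers_def by (intro exI[of _ i'] exI[of _ j']) auto
    then show ?thesis ..
  qed
next
  assume "(x = a \<and> y \<in> set P) \<or> prefers P x y"
  then show "prefers (a # P) x y"
  proof
    assume xy: "x = a \<and> y \<in> set P"
    then obtain k where "k < length P" "P ! k = y"
      by (auto simp: in_set_conv_nth)
    with xy show ?thesis
      unfolding prefers_def by (intro exI[of _ 0] exI[of _ "Suc k"]) auto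
  next
    assume "prefers P x y"
    then obtain i j where "i < j" "j < length P" "P ! i = x" "P ! j = y"
      by (auto simp: prefers_def)
    then show ?thesis
      unfolding prefers_def by (intro exI[of _ "Suc i"] exI[of _ "Suc j"]) auto
  qed
qed

lemma prefers_total: "x \<in> set P \<Longrightarrow> y \<in> set P \<Longrightarrow> x \<noteq> y \<Longrightarrow> prefers P x y \<or> prefers P y x"
  by (induction P) (auto simp: prefers_Cons)

definition top_swap :: "'a list set \<Rightarrow> 'a \<Rightarrow> 'a \<Rightarrow> bool" where
  "top_swap D a b \<longleftrightarrow> (\<exists>r. a # b # r \<in> D \<and> b # a # r \<in> D)"

lemma top_swap_sym: "top_swap D a b \<Longrightarrow> top_swap D b a"
  unfolding top_swap_def by blast

lemma adjacent_same_top_or_top_swap: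
  assumes "adjacent P Q"
  shows "rtop Q = rtop P \<or> (\<exists>a b r. P = a # b # r \<and> Q = b # a # r)"
proof -
  obtain k where k: "Suc k < length P" "Q = P[k := P ! Suc k, Suc k := P ! k]"
    using assms by (auto simp: adjacent_def)
  then obtain a b r where P: "P = a # b # r"
    by (cases P rule: remdups_adj.cases) auto
  show ?thesis
    using k P by (cases k) (auto simp: rtop_def)
qed

lemma is_path_take: "is_path D ps \<Longrightarrow> 0 < k \<Longrightarrow> is_path D (take k ps)"
  unfolding is_path_def by (auto dest: in_set_takeD)

lemma is_path_snoc:
  assumes "is_path D ps" "Q \<in> D" "Q \<notin> set ps" "adjacent (last ps) Q"
  shows "is_path D (ps @ [Q])"
  unfolding is_path_def
proof (intro conjI allI impI)
  fix i assume i: "Suc i < length (ps @ [Q])"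
  show "adjacent ((ps @ [Q]) ! i) ((ps @ [Q]) ! Suc i)"
  proof (cases "Suc i < length ps")
    case True
    then show ?thesis using assms(1) by (simp add: is_path_def nth_append)
  next
    case False
    then have "i = length ps - 1" "ps \<noteq> []" using i by auto
    then show ?thesis using assms(4) by (simp add: nth_append last_conv_nth)
  qed
qed (use assms in \<open>auto simp: is_path_def\<close>)

lemma top_connected_refl: "P \<in> D \<Longrightarrow> top_connected D P P"
  unfolding top_connected_def is_path_def by (intro exI[of _ "[P]"]) auto

lemma top_connected_rtop:
  assumes "top_connected D P Q"
  shows "rtop Q = rtop P"
proof -
  obtain ps where "ps \<noteq> []" "last ps = Q" "\<forall>R\<in>set ps. rtop R = rtop P"
    using assms by (auto simp: top_connected_def is_path_def)
  then show ?thesis by auto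
qed

lemma top_connected_snoc:
  assumes "top_connected D P M" "adjacent M Q" "Q \<in> D" "rtop Q = rtop P"
  shows "top_connected D P Q"
proof -
  obtain ps where ps: "is_path D ps" "hd ps = P" "last ps = M" "\<forall>R\<in>set ps. rtop R = rtop P"
    using assms(1) by (auto simp: top_connected_def)
  then have "ps \<noteq> []" by (simp add: is_path_def)
  show ?thesis
  proof (cases "Q \<in> set ps")
    case True
    then obtain k where k: "k < length ps" "ps ! k = Q" by (auto simp: in_set_conv_nth)
    then have "last (take (Suc k) ps) = Q"
      by (simp add: take_Suc_conv_app_nth)
    then show ?thesis
      using ps \<open>ps \<noteq> []\<close> is_path_take[OF ps(1), of "Suc k"] unfolding top_connected_def
      by (intro exI[of _ "take (Suc k) ps"]) (auto dest: in_set_takeD)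
  next
    case False
    then show ?thesis
      using ps \<open>ps \<noteq> []\<close> is_path_snoc[OF ps(1) assms(3)] assms(2,4) unfolding top_connected_def
      by (intro exI[of _ "ps @ [Q]"]) auto
  qed
qed

lemma TCC_eq: "P \<in> D \<Longrightarrow> TCC D P = {Q \<in> D. top_connected D P Q}"
  by (auto simp: TCC_def top_connected_refl)

lemma neighbour_TCC_top_swap:
  assumes "P \<in> D" "neighbour D (TCC D P) Q"
  shows "top_swap D (rtop P) (rtop Q)"
proof -
  obtain M where M: "M \<in> D" "top_connected D P M" "adjacent M Q"
    and Q: "Q \<in> D" "\<not> top_connected D P Q"
    using assms by (auto simp: neighbour_def TCC_eq)
  have M_top: "rtop M = rtop P"
    using M(2) by (rule top_connected_rtop)
  have "rtop Q \<noteq> rtop M"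
    using top_connected_snoc[OF M(2,3) Q(1)] Q(2) M_top by auto
  then obtain a b r where "M = a # b # r" "Q = b # a # r"
    using adjacent_same_top_or_top_swap[OF M(3)] by blast
  with M(1) Q(1) M_top show ?thesis
    unfolding top_swap_def by auto
qed

lemma connected_two_neighbours_top_swaps:
  assumes "connected_two_neighbours D" "P \<in> D"
  shows "\<exists>b c. b \<noteq> c \<and> top_swap D (rtop P) b \<and> top_swap D (rtop P) c"
proof -
  obtain Q R where "neighbour D (TCC D P) Q" "neighbour D (TCC D P) R" "rtop Q \<noteq> rtop R"
    using assms unfolding connected_two_neighbours_def by blast
  then show ?thesis
    using neighbour_TCC_top_swap[OF assms(2)] by blast
qed

lemma connected_dom_top_swap_closed:
  assumes "connected_dom D" "P \<in> D" "Q \<in> D" "rtop P \<in> S"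
    and closed: "\<And>a b. a \<in> S \<Longrightarrow> top_swap D a b \<Longrightarrow> b \<in> S"
  shows "rtop Q \<in> S"
proof -
  obtain ps where ps: "is_path D ps" "hd ps = P" "last ps = Q"
    using assms(1-3) unfolding connected_dom_def by blast
  then have "ps \<noteq> []" by (simp add: is_path_def)
  have reach: "rtop (ps ! i) \<in> S" if "i < length ps" for i
    using that
  proof (induction i)
    case 0
    then show ?case using ps(2) \<open>ps \<noteq> []\<close> assms(4) by (simp add: hd_conv_nth)
  next
    case (Suc i)
    then have IH: "rtop (ps ! i) \<in> S" by simp
    have adj: "adjacent (ps ! i) (ps ! Suc i)" and in_D: "ps ! i \<in> D" "ps ! Suc i \<in> D"
      using ps(1) Suc.prems by (auto simp: is_path_def)
    from adjacent_same_top_or_top_swap[OF adj] show ?case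
    proof
      assume "\<exists>a b r. ps ! i = a # b # r \<and> ps ! Suc i = b # a # r"
      then obtain a b r where "ps ! i = a # b # r" "ps ! Suc i = b # a # r" by blast
      with in_D IH show ?case
        using closed unfolding top_swap_def by auto
    qed (use IH in simp)
  qed
  from reach[of "length ps - 1"] show ?thesis
    using ps(3) \<open>ps \<noteq> []\<close> by (simp add: last_conv_nth)
qed

lemma non_backtracking_walk:
  assumes "E p q" and step: "\<And>x y. E x y \<Longrightarrow> \<exists>z. E y z \<and> z \<noteq> x"
  shows "\<exists>v. v 0 = p \<and> v 1 = q \<and> (\<forall>n. E (v n) (v (Suc n)) \<and> v (Suc (Suc n)) \<noteq> v n)"
proof -
  have "\<exists>w. \<forall>n. (E (fst (w n)) (snd (w n)) \<and> (n = 0 \<longrightarrow> w n = (p, q))) \<and>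
      fst (w (Suc n)) = snd (w n) \<and> snd (w (Suc n)) \<noteq> fst (w n)"
  proof (rule dependent_nat_choice)
    fix e :: "'a \<times> 'a" and n :: nat
    assume "E (fst e) (snd e) \<and> (n = 0 \<longrightarrow> e = (p, q))"
    then obtain z where "E (snd e) z" "z \<noteq> fst e"
      using step by blast
    then show "\<exists>e'. (E (fst e') (snd e') \<and> (Suc n = 0 \<longrightarrow> e' = (p, q))) \<and>
        fst e' = snd e \<and> snd e' \<noteq> fst e"
      by (intro exI[of _ "(snd e, z)"]) auto
  qed (use assms(1) in auto)
  then obtain w where w: "\<And>n. E (fst (w n)) (snd (w n))" "w 0 = (p, q)"
    "\<And>n. fst (w (Suc n)) = snd (w n)" "\<And>n. snd (w (Suc n)) \<noteq> fst (w n)"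
    by blast
  then show ?thesis
    by (intro exI[of _ "\<lambda>n. fst (w n)"]) (metis One_nat_def fst_conv snd_conv)
qed

definition first_option_set :: "'a list set \<Rightarrow> ('a list \<Rightarrow> 'a list \<Rightarrow> 'a) \<Rightarrow> 'a list \<Rightarrow> 'a set" where
  "first_option_set D f P2 = (\<lambda>P1. f P1 P2) ` D"

definition first_wins :: "'a list set \<Rightarrow> ('a list \<Rightarrow> 'a list \<Rightarrow> 'a) \<Rightarrow> 'a \<Rightarrow> 'a \<Rightarrow> bool" where
  "first_wins D f a b \<longleftrightarrow> (\<forall>P1\<in>D. \<forall>P2\<in>D. rtop P1 = a \<longrightarrow> rtop P2 = b \<longrightarrow> f P1 P2 = a)"

definition second_wins :: "'a list set \<Rightarrow> ('a list \<Rightarrow> 'a list \<Rightarrow> 'a) \<Rightarrow> 'a \<Rightarrow> 'a \<Rightarrow> bool" where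
  "second_wins D f a b \<longleftrightarrow> (\<forall>P1\<in>D. \<forall>P2\<in>D. rtop P1 = a \<longrightarrow> rtop P2 = b \<longrightarrow> f P1 P2 = b)"

lemma first_wins_swap_voters: "first_wins D (\<lambda>P1 P2. f P2 P1) a b \<longleftrightarrow> second_wins D f b a"
  unfolding first_wins_def second_wins_def by auto

locale two_voter_scf =
  fixes A :: "'a set" and D :: "'a list set" and f :: "'a list \<Rightarrow> 'a list \<Rightarrow> 'a"
  assumes finite_A: "finite A"
    and linorder_on_D: "P \<in> D \<Longrightarrow> linorder_on A P"
    and connected_two_neighbours_D: "connected_two_neighbours D"
    and f_in_A: "P1 \<in> D \<Longrightarrow> P2 \<in> D \<Longrightarrow> f P1 P2 \<in> A"
    and unanimity: "P1 \<in> D \<Longrightarrow> P2 \<in> D \<Longrightarrow> rtop P1 = rtop P2 \<Longrightarrow> f P1 P2 = rtop P1"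
    and strategy_proof_first: "P1 \<in> D \<Longrightarrow> P2 \<in> D \<Longrightarrow> Q \<in> D \<Longrightarrow> \<not> prefers P1 (f Q P2) (f P1 P2)"
    and strategy_proof_second: "P1 \<in> D \<Longrightarrow> P2 \<in> D \<Longrightarrow> Q \<in> D \<Longrightarrow> \<not> prefers P2 (f P1 Q) (f P1 P2)"
begin

text \<open>Interpreting the locale for the function with the voters exchanged, under the prefix
  swapped, yields the voter-2 counterpart of every lemma below.\<close>

lemma swap_voters: "two_voter_scf A D (\<lambda>P1 P2. f P2 P1)"
  by unfold_locales
    (auto simp: finite_A linorder_on_D connected_two_neighbours_D f_in_A unanimity
      strategy_proof_first strategy_proof_second)

lemma distinct_D: "P \<in> D \<Longrightarrow> distinct P"
  and set_D: "P \<in> D \<Longrightarrow> set P = A"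
  using linorder_on_D by (auto simp: linorder_on_def)

lemma prefers_rtop: "P \<in> D \<Longrightarrow> x \<in> A \<Longrightarrow> x \<noteq> rtop P \<Longrightarrow> prefers P (rtop P) x"
  using set_D[of P] by (cases P) (auto simp: prefers_Cons)

lemma not_below_second:
  "a # b # r \<in> D \<Longrightarrow> x \<in> A \<Longrightarrow> \<not> prefers (a # b # r) b x \<Longrightarrow> x = a \<or> x = b"
  using set_D[of "a # b # r"] by (auto simp: prefers_Cons)

lemma top_swap_distinct: "top_swap D a b \<Longrightarrow> a \<noteq> b"
  unfolding top_swap_def using distinct_D by fastforce

lemma top_swap_in_A: "top_swap D a b \<Longrightarrow> a \<in> A"
  unfolding top_swap_def using set_D by fastforce

lemma top_swap_extend:
  assumes "top_swap D x y"
  shows "\<exists>z. top_swap D y z \<and> z \<noteq> x"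
proof -
  obtain r where "y # x # r \<in> D"
    using assms unfolding top_swap_def by blast
  from connected_two_neighbours_top_swaps[OF connected_two_neighbours_D this] show ?thesis
    by auto
qed

lemma top_swap_closed:
  assumes "P1 \<in> D" "P2 \<in> D" "rtop P1 \<in> S" "\<And>a b. a \<in> S \<Longrightarrow> top_swap D a b \<Longrightarrow> b \<in> S"
  shows "rtop P2 \<in> S"
  using connected_dom_top_swap_closed assms connected_two_neighbours_D
  unfolding connected_two_neighbours_def by blast

lemma first_option_setI: "P1 \<in> D \<Longrightarrow> f P1 P2 \<in> first_option_set D f P2"
  by (simp add: first_option_set_def)

lemma not_prefers_first_option:
  "P1 \<in> D \<Longrightarrow> P2 \<in> D \<Longrightarrow> x \<in> first_option_set D f P2 \<Longrightarrow> \<not> prefers P1 x (f P1 P2)"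
  using strategy_proof_first by (auto simp: first_option_set_def)

lemma rtop_in_first_option_set: "P2 \<in> D \<Longrightarrow> rtop P2 \<in> first_option_set D f P2"
  using first_option_setI[of P2 P2] unanimity by simp

lemma top_chosen_if_first_option:
  assumes "P1 \<in> D" "P2 \<in> D" "rtop P1 \<in> first_option_set D f P2"
  shows "f P1 P2 = rtop P1"
  using not_prefers_first_option[OF assms] prefers_rtop[OF assms(1) f_in_A[OF assms(1,2)]] by blast

lemma not_prefers_other_top: "P1 \<in> D \<Longrightarrow> P2 \<in> D \<Longrightarrow> \<not> prefers P1 (rtop P2) (f P1 P2)"
  using not_prefers_first_option rtop_in_first_option_set by blast

lemma choice_at_top_swap:
  assumes ab: "a # b # r \<in> D" and ba: "b # a # r \<in> D"
    and P1: "P1 \<in> D" "rtop P1 = a" and P2: "P2 \<in> D" "rtop P2 = b"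
  shows "f P1 P2 = a \<or> f P1 P2 = b"
proof (rule ccontr)
  interpret swapped: two_voter_scf A D "\<lambda>P1 P2. f P2 P1" by (fact swap_voters)
  assume other: "\<not> (f P1 P2 = a \<or> f P1 P2 = b)"
  have "f (a # b # r) P2 \<noteq> a"
    using top_chosen_if_first_option[OF P1(1) P2(1)] first_option_setI[OF ab, of P2] P1(2) other
    by metis
  then have ab_P2: "f (a # b # r) P2 = b"
    using not_below_second[OF ab f_in_A[OF ab P2(1)]] not_prefers_other_top[OF ab P2(1)] P2(2)
    by blast
  have "f P1 (b # a # r) \<noteq> b"
    using swapped.top_chosen_if_first_option[OF P2(1) P1(1)] swapped.first_option_setI[OF ba, of P1]
      P2(2) other by metis
  then have P1_ba: "f P1 (b # a # r) = a"
    using not_below_second[OF ba f_in_A[OF P1(1) ba]] swapped.not_prefers_other_top[OF ba P1(1)]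
      P1(2) by blast
  have "f (a # b # r) (b # a # r) = a \<or> f (a # b # r) (b # a # r) = b"
    using not_below_second[OF ab f_in_A[OF ab ba]] not_prefers_other_top[OF ab ba] by simp
  then show False
  proof
    assume "f (a # b # r) (b # a # r) = a"
    then show False
      using strategy_proof_second[OF ab ba P2(1)] ab_P2 by (simp add: prefers_Cons)
  next
    assume "f (a # b # r) (b # a # r) = b"
    then show False
      using strategy_proof_first[OF ab ba P1(1)] P1_ba by (simp add: prefers_Cons)
  qed
qed

lemma first_wins_if_chosen_at_top_swap:
  assumes ab: "a # b # r \<in> D" and ba: "b # a # r \<in> D"
    and chosen: "f (a # b # r) (b # a # r) = a"
  shows "first_wins D f a b"
  unfolding first_wins_def
proof (intro ballI impI)
  interpret swapped: two_voter_scf A D "\<lambda>P1 P2. f P2 P1" by (fact swap_voters)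
  fix P1 P2 assume "P1 \<in> D" "P2 \<in> D" "rtop P1 = a" "rtop P2 = b"
  moreover have "f P1 (b # a # r) = a"
    using top_chosen_if_first_option[OF \<open>P1 \<in> D\<close> ba] chosen first_option_setI[OF ab, of "b # a # r"]
      \<open>rtop P1 = a\<close> by simp
  ultimately have "f P1 P2 \<noteq> b"
    using swapped.top_chosen_if_first_option[OF ba \<open>P1 \<in> D\<close>]
      swapped.first_option_setI[OF \<open>P2 \<in> D\<close>, of P1] distinct_D[OF ab] by auto
  then show "f P1 P2 = a"
    using choice_at_top_swap[OF ab ba] \<open>P1 \<in> D\<close> \<open>P2 \<in> D\<close> \<open>rtop P1 = a\<close> \<open>rtop P2 = b\<close> by blast
qed

lemma first_or_second_wins:
  assumes "top_swap D a b"
  shows "first_wins D f a b \<or> second_wins D f a b"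
proof -
  interpret swapped: two_voter_scf A D "\<lambda>P1 P2. f P2 P1" by (fact swap_voters)
  obtain r where ab: "a # b # r \<in> D" and ba: "b # a # r \<in> D"
    using assms unfolding top_swap_def by blast
  have "f (a # b # r) (b # a # r) = a \<or> f (a # b # r) (b # a # r) = b"
    using choice_at_top_swap[OF ab ba ab _ ba] by simp
  then show ?thesis
    using first_wins_if_chosen_at_top_swap[OF ab ba] swapped.first_wins_if_chosen_at_top_swap[OF ba ab]
    by (auto simp: first_wins_swap_voters)
qed

lemma first_option_set_mono_if_first_wins:
  assumes "top_swap D y c" "first_wins D f y c" "P2 \<in> D" "c \<in> first_option_set D f P2"
  shows "y \<in> first_option_set D f P2"
proof -
  obtain r where yc: "y # c # r \<in> D" and cy: "c # y # r \<in> D"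
    using assms(1) unfolding top_swap_def by blast
  have chosen: "f (y # c # r) (c # y # r) = y"
    using assms(2) yc cy by (auto simp: first_wins_def)
  have "f (y # c # r) P2 \<noteq> c"
  proof
    assume "f (y # c # r) P2 = c"
    then show False
      using strategy_proof_second[OF yc cy assms(3)] chosen by (simp add: prefers_Cons)
  qed
  moreover have "f (y # c # r) P2 = y \<or> f (y # c # r) P2 = c"
    using not_below_second[OF yc f_in_A[OF yc assms(3)]] not_prefers_first_option[OF yc assms(3,4)]
    by blast
  ultimately show ?thesis
    using first_option_setI[OF yc, of P2] by simp
qed

lemma choice_unchanged_by_top_swap:
  assumes cy: "c # y # r \<in> D" and yc: "y # c # r \<in> D" and P2: "P2 \<in> D"
    and other: "f (c # y # r) P2 \<notin> {c, y}"
  shows "f (y # c # r) P2 = f (c # y # r) P2"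
proof (rule ccontr)
  let ?x = "f (y # c # r) P2" and ?z = "f (c # y # r) P2"
  assume "?x \<noteq> ?z"
  have not_cy: "\<not> prefers (c # y # r) ?x ?z" and not_yc: "\<not> prefers (y # c # r) ?z ?x"
    using not_prefers_first_option first_option_setI cy yc P2 by blast+
  have z: "?z \<in> set r"
    using f_in_A[OF cy P2] set_D[OF cy] other by auto
  show False
  proof (cases "?x \<in> {c, y}")
    case True
    then show False using not_cy z by (auto simp: prefers_Cons)
  next
    case False
    then have "?x \<in> set r"
      using f_in_A[OF yc P2] set_D[OF yc] by auto
    then show False
      using prefers_total[OF _ z \<open>?x \<noteq> ?z\<close>] not_cy not_yc by (auto simp: prefers_Cons)
  qed
qed

lemma first_wins_propagates:
  assumes xy: "top_swap D x y" and yz: "top_swap D y z" and "z \<noteq> x"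
    and wins: "first_wins D f x y"
  shows "first_wins D f y z"
proof -
  obtain r where xyr: "x # y # r \<in> D" and yxr: "y # x # r \<in> D"
    using xy unfolding top_swap_def by blast
  obtain s where yzs: "y # z # s \<in> D" and zys: "z # y # s \<in> D"
    using yz unfolding top_swap_def by blast
  have "\<not> second_wins D f y z"
  proof
    assume "second_wins D f y z"
    then have "f (y # x # r) (z # y # s) = z"
      using yxr zys by (auto simp: second_wins_def)
    moreover have "z \<notin> {y, x}"
      using top_swap_distinct[OF yz] \<open>z \<noteq> x\<close> by auto
    ultimately have "f (x # y # r) (z # y # s) = z"
      using choice_unchanged_by_top_swap[OF yxr xyr zys] by simp
    moreover have "f (x # y # r) (y # z # s) = x"
      using wins xyr yzs by (auto simp: first_wins_def)
    moreover have "prefers (y # z # s) z x"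
      using set_D[OF yzs] set_D[OF xyr] top_swap_distinct[OF xy] \<open>z \<noteq> x\<close>
      by (auto simp: prefers_Cons)
    ultimately show False
      using strategy_proof_second[OF xyr yzs zys] by simp
  qed
  then show ?thesis
    using first_or_second_wins[OF yz] by blast
qed

lemma not_first_option_if_second_wins:
  assumes ab: "a # b # r \<in> D" and ba: "b # a # r \<in> D" and "second_wins D f b a"
  shows "b \<notin> first_option_set D f (a # b # r)"
proof
  assume "b \<in> first_option_set D f (a # b # r)"
  then have "f (b # a # r) (a # b # r) = b"
    using top_chosen_if_first_option[OF ba ab] by simp
  moreover have "f (b # a # r) (a # b # r) = a"
    using assms(3) ab ba by (auto simp: second_wins_def)
  ultimately show False
    using distinct_D[OF ab] by simp
qed

lemma not_first_wins_and_second_wins: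
  assumes "top_swap D p q" "first_wins D f p q" "second_wins D f q p"
  shows False
proof -
  interpret swapped: two_voter_scf A D "\<lambda>P1 P2. f P2 P1" by (fact swap_voters)
  obtain v where v: "v 0 = p" "v 1 = q" "\<And>n. top_swap D (v n) (v (Suc n))"
    "\<And>n. v (Suc (Suc n)) \<noteq> v n"
    using non_backtracking_walk[of "top_swap D", OF assms(1) top_swap_extend] by blast
  have wins: "first_wins D f (v n) (v (Suc n)) \<and> second_wins D f (v (Suc n)) (v n)" for n
  proof (induction n)
    case 0
    then show ?case using assms v by simp
  next
    case (Suc n)
    then show ?case
      using first_wins_propagates[OF v(3) v(3) v(4)] swapped.first_wins_propagates[OF v(3) v(3) v(4)]
      by (simp add: first_wins_swap_voters)
  qed
  have chain: "v (k + m) \<in> first_option_set D f P2 \<Longrightarrow> v k \<in> first_option_set D f P2"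
    if "P2 \<in> D" for k m P2
    using first_option_set_mono_if_first_wins[OF v(3) conjunct1[OF wins] that]
    by (induction m) auto
  have "finite (range v)"
    using finite_A top_swap_in_A[OF v(3)] by (auto intro: finite_subset)
  then have "\<not> inj v"
    using finite_imageD infinite_UNIV_nat by blast
  then obtain i j where "i < j" "v i = v j"
    unfolding inj_def by (metis nat_neq_iff)
  obtain r where ab: "v i # v (Suc i) # r \<in> D" and ba: "v (Suc i) # v i # r \<in> D"
    using v(3)[of i] unfolding top_swap_def by blast
  have "v (Suc i) \<in> first_option_set D f (v i # v (Suc i) # r)"
    using chain[OF ab, of "Suc i" "j - Suc i"] rtop_in_first_option_set[OF ab] \<open>i < j\<close> \<open>v i = v j\<close>
    by simp
  then show False
    using not_first_option_if_second_wins[OF ab ba] wins by blast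
qed

lemma first_wins_sym: "top_swap D a b \<Longrightarrow> first_wins D f a b \<Longrightarrow> first_wins D f b a"
  using first_or_second_wins[OF top_swap_sym] not_first_wins_and_second_wins by blast

lemma first_wins_spreads:
  "top_swap D x y \<Longrightarrow> first_wins D f x y \<Longrightarrow> top_swap D y z \<Longrightarrow> first_wins D f y z"
  using first_wins_sym first_wins_propagates by (cases "z = x") auto

lemma first_wins_everywhere:
  assumes "top_swap D p q" "first_wins D f p q" "top_swap D a b"
  shows "first_wins D f a b"
proof -
  let ?S = "{c. \<forall>d. top_swap D c d \<longrightarrow> first_wins D f c d}"
  obtain r s where "q # p # r \<in> D" "a # b # s \<in> D"
    using assms(1,3) unfolding top_swap_def by blast
  then have "rtop (a # b # s) \<in> ?S"
  proof (rule top_swap_closed)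
    show "rtop (q # p # r) \<in> ?S"
      using first_wins_spreads[OF assms(1,2)] by simp
    show "d \<in> ?S" if "c \<in> ?S" "top_swap D c d" for c d
      using that first_wins_spreads by blast
  qed
  with assms(3) show ?thesis by simp
qed

lemma dictator_if_first_wins:
  assumes "top_swap D p q" "first_wins D f p q" "P1 \<in> D" "P2 \<in> D"
  shows "f P1 P2 = rtop P1"
proof -
  have "rtop P1 \<in> first_option_set D f P2"
  proof (rule top_swap_closed[OF assms(4,3)])
    show "rtop P2 \<in> first_option_set D f P2"
      using rtop_in_first_option_set[OF assms(4)] .
    show "b \<in> first_option_set D f P2" if "a \<in> first_option_set D f P2" "top_swap D a b" for a b
      using first_option_set_mono_if_first_wins[OF top_swap_sym[OF that(2)]
          first_wins_everywhere[OF assms(1,2) top_swap_sym[OF that(2)]] assms(4) that(1)] .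
  qed
  then show ?thesis
    using top_chosen_if_first_option assms(3,4) by blast
qed

end

theorem proposition2:
  fixes A :: "'a set" and D :: "'a list set" and f :: "'a list \<Rightarrow> 'a list \<Rightarrow> 'a"
  assumes "finite A" and "card A \<ge> 3"
    and "domain A D"
    and "minimally_rich A D"
    and "connected_two_neighbours D"
    and "\<forall>P1\<in>D. \<forall>P2\<in>D. f P1 P2 \<in> A"
    and "unanimous D f"
    and "strategy_proof D f"
  shows "dictatorship D f"
proof -
  interpret two_voter_scf A D f
    using assms by unfold_locales (auto simp: domain_def unanimous_def strategy_proof_def)
  interpret swapped: two_voter_scf A D "\<lambda>P1 P2. f P2 P1" by (fact swap_voters)
  obtain P where "P \<in> D"
    using \<open>domain A D\<close> by (auto simp: domain_def)
  then obtain b where swap: "top_swap D (rtop P) b"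
    using connected_two_neighbours_top_swaps[OF connected_two_neighbours_D] by blast
  from first_or_second_wins[OF swap] show ?thesis
  proof
    assume "first_wins D f (rtop P) b"
    then show ?thesis
      using dictator_if_first_wins[OF swap] unfolding dictatorship_def by blast
  next
    assume "second_wins D f (rtop P) b"
    then have "first_wins D (\<lambda>P1 P2. f P2 P1) b (rtop P)"
      by (simp add: first_wins_swap_voters)
    then show ?thesis
      using swapped.dictator_if_first_wins[OF top_swap_sym[OF swap]] unfolding dictatorship_def
      by blast
  qed
qed

end
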